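(* Let $d\in\{0,1,\dots,S\}$ and let $\bar\xi_d$ be the uniform design on $\mathcal{X}^{(S)}_d$. Then its information matrix is block diagonal, $$\mathbf{M}(\bar\xi_d)=\begin{pmatrix} h_1(d)\,\mathbf{Id}_{K}\otimes\mathbf{M} & \mathbf{0} & \mathbf{0}\\ \mathbf{0} & h_2(d)\,\mathbf{Id}_{\binom K2}\otimes\mathbf{M}\otimes\mathbf{M} & \mathbf{0}\\ \mathbf{0} & \mathbf{0} & h_3(d)\,\mathbf{Id}_{\binom K3}\otimes\mathbf{M}\otimes\mathbf{M}\otimes\mathbf{M}\end{pmatrix},$$ where the three diagonal blocks correspond to the main-effect, first-order-interaction and second-order-interaction components of $\mathbf{f}$, and $$h_1(d)=\frac{d}{K},\qquad h_2(d)=\frac{d}{2vK(K-1)}\,(2Sv-2S-dv-v+2),\qquad h_3(d)=\frac{d\,\lambda(d)}{4v^2K(K-1)(K-2)},$$ with $$\lambda(d)=3S^2+3S^2v^2-6S^2v-3Sdv^2+3Sdv-6Sv^2+15Sv-9S+d^2v^2+3dv^2-6dv+2v^2-6v+6 .$$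
   Context: Fix integers $v\ge 2$, $K\ge 3$ and $S$ with $3\le S\le K$. Let $\mathbf{e}_i$ denote the $i$th unit vector of $\mathbb{R}^{v-1}$ and $\mathbf{1}_{v-1}$ the all-ones vector. Define $\mathbf{f}_1:\{0,1,\dots,v\}\to\mathbb{R}^{v-1}$ by $\mathbf{f}_1(i)=\mathbf{e}_i$ for $1\le i\le v-1$, $\mathbf{f}_1(v)=-\mathbf{1}_{v-1}$, $\mathbf{f}_1(0)=\mathbf{0}$. For $\mathbf{i}=(i_1,\dots,i_K)\in\{0,\dots,v\}^K$ let $\mathbf{f}(\mathbf{i})\in\mathbb{R}^p$ be the vector obtained by stacking the vectors $\mathbf{f}_1(i_k)$ ($k=1,\dots,K$), then $\mathbf{f}_1(i_k)\otimes\mathbf{f}_1(i_\ell)$ ($k<\ell$, lexicographic order), then $\mathbf{f}_1(i_k)\otimes\mathbf{f}_1(i_\ell)\otimes\mathbf{f}_1(i_m)$ ($k<\ell<m$, lexicographic order); here $\otimes$ is the Kronecker product and $p=p_1+p_2+p_3$ with $p_1=K(v-1)$, $p_2=\binom K2(v-1)^2$, $p_3=\binom K3(v-1)^3$. The design region $\mathcal{X}^{(S)}$ is the set of ordered pairs $(\mathbf{i},\mathbf{j})$ with $\mathbf{i},\mathbf{j}\in\{0,\dots,v\}^K$ for which there is a set $A$ of exactly $S$ attributes with $i_k,j_k\in\{1,\dots,v\}$ for $k\in A$ and $i_k=j_k=0$ for $k\notin A$. For $d\in\{0,\dots,S\}$, $\mathcal{X}^{(S)}_d$ is the set of pairs in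 $\mathcal{X}^{(S)}$ with $i_k\ne j_k$ for exactly $d$ indices $k$ (the comparison depth). An approximate design $\xi$ is a finitely supported probability measure on $\mathcal{X}^{(S)}$, with information matrix $\mathbf{M}(\xi)=\sum_{(\mathbf{i},\mathbf{j})}\xi(\mathbf{i},\mathbf{j})(\mathbf{f}(\mathbf{i})-\mathbf{f}(\mathbf{j}))(\mathbf{f}(\mathbf{i})-\mathbf{f}(\mathbf{j}))^\top$. The design $\bar\xi_d$ assigns weight $1/|\mathcal{X}^{(S)}_d|$ to each pair of $\mathcal{X}^{(S)}_d$ and $0$ elsewhere. Finally $\mathbf{M}=\frac{2}{v-1}(\mathbf{Id}_{v-1}+\mathbf{1}_{v-1}\mathbf{1}_{v-1}^\top)$. *)

theory Defs
  imports "HOL-Probability.Probability"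
begin

text \<open>Attributes are indexed 0..K-1, levels 1..v, level 0 = attribute absent.
  A profile is a function nat => nat, with values in 0..v below K and 0 from K on.\<close>

type_synonym profile = "nat \<Rightarrow> nat"

definition profiles :: "nat \<Rightarrow> nat \<Rightarrow> profile set" where
  "profiles K v = {i. (\<forall>k<K. i k \<le> v) \<and> (\<forall>k\<ge>K. i k = 0)}"

definition f1 :: "nat \<Rightarrow> nat \<Rightarrow> nat \<Rightarrow> real" where
  "f1 v l a = (if l = 0 then 0 else if l = v then -1 else if l = a then 1 else 0)"

text \<open>Coordinates of the regression vector f, labelled structurally:
  Main k a: coordinate a of block f_1(i_k);
  Int2 k l a b: coordinate (a,b) of f_1(i_k) (x) f_1(i_l) (Kronecker, lexicographic);
  Int3 k l m a b c: coordinate (a,b,c) of f_1(i_k) (x) f_1(i_l) (x) f_1(i_m).\<close>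
datatype coord = Main nat nat | Int2 nat nat nat nat | Int3 nat nat nat nat nat nat

definition coords :: "nat \<Rightarrow> nat \<Rightarrow> coord set" where
  "coords K v =
     {Main k a | k a. k < K \<and> 1 \<le> a \<and> a \<le> v - 1}
   \<union> {Int2 k l a b | k l a b. k < l \<and> l < K \<and> 1 \<le> a \<and> a \<le> v - 1 \<and> 1 \<le> b \<and> b \<le> v - 1}
   \<union> {Int3 k l m a b c | k l m a b c. k < l \<and> l < m \<and> m < K \<and>
        1 \<le> a \<and> a \<le> v - 1 \<and> 1 \<le> b \<and> b \<le> v - 1 \<and> 1 \<le> c \<and> c \<le> v - 1}"

fun fvec :: "nat \<Rightarrow> profile \<Rightarrow> coord \<Rightarrow> real" where
  "fvec v i (Main k a) = f1 v (i k) a"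
| "fvec v i (Int2 k l a b) = f1 v (i k) a * f1 v (i l) b"
| "fvec v i (Int3 k l m a b c) = f1 v (i k) a * f1 v (i l) b * f1 v (i m) c"

definition design_region :: "nat \<Rightarrow> nat \<Rightarrow> nat \<Rightarrow> (profile \<times> profile) set" where
  "design_region K v S = {(i, j). i \<in> profiles K v \<and> j \<in> profiles K v \<and>
     (\<exists>A. A \<subseteq> {..<K} \<and> card A = S \<and>
        (\<forall>k<K. (k \<in> A \<longrightarrow> i k \<in> {1..v} \<and> j k \<in> {1..v}) \<and>
                (k \<notin> A \<longrightarrow> i k = 0 \<and> j k = 0)))}"

definition design_region_d :: "nat \<Rightarrow> nat \<Rightarrow> nat \<Rightarrow> nat \<Rightarrow> (profile \<times> profile) set" where
  "design_region_d K v S d = {(i, j) \<in> design_region K v S. card {k. k < K \<and> i k \<noteq> j k} = d}"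

definition info_matrix :: "nat \<Rightarrow> (profile \<times> profile) pmf \<Rightarrow> coord \<Rightarrow> coord \<Rightarrow> real" where
  "info_matrix v \<xi> p q = (\<Sum>x\<in>set_pmf \<xi>. pmf \<xi> x *
       ((fvec v (fst x) p - fvec v (snd x) p) * (fvec v (fst x) q - fvec v (snd x) q)))"

definition uniform_design :: "nat \<Rightarrow> nat \<Rightarrow> nat \<Rightarrow> nat \<Rightarrow> (profile \<times> profile) pmf" where
  "uniform_design K v S d = pmf_of_set (design_region_d K v S d)"

definition Mmat :: "nat \<Rightarrow> nat \<Rightarrow> nat \<Rightarrow> real" where
  "Mmat v a b = 2 / (real v - 1) * ((if a = b then 1 else 0) + 1)"

definition h1 :: "nat \<Rightarrow> nat \<Rightarrow> nat \<Rightarrow> nat \<Rightarrow> real" where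
  "h1 K v S d = real d / real K"

definition h2 :: "nat \<Rightarrow> nat \<Rightarrow> nat \<Rightarrow> nat \<Rightarrow> real" where
  "h2 K v S d = real d / (2 * real v * real K * (real K - 1)) *
     (2 * real S * real v - 2 * real S - real d * real v - real v + 2)"

definition lambda_d :: "nat \<Rightarrow> nat \<Rightarrow> nat \<Rightarrow> real" where
  "lambda_d v S d =
     3*(real S)^2 + 3*(real S)^2*(real v)^2 - 6*(real S)^2*real v
     - 3*real S*real d*(real v)^2 + 3*real S*real d*real v - 6*real S*(real v)^2
     + 15*real S*real v - 9*real S
     + (real d)^2*(real v)^2 + 3*real d*(real v)^2 - 6*real d*real v
     + 2*(real v)^2 - 6*real v + 6"

definition h3 :: "nat \<Rightarrow> nat \<Rightarrow> nat \<Rightarrow> nat \<Rightarrow> real" where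
  "h3 K v S d = real d * lambda_d v S d /
     (4 * (real v)^2 * real K * (real K - 1) * (real K - 2))"

text \<open>The claimed block-diagonal matrix, entry (p,q): blocks
  h1 Id_K (x) M, h2 Id_(K choose 2) (x) M (x) M, h3 Id_(K choose 3) (x) M (x) M (x) M,
  zero off the diagonal blocks.\<close>
fun block_matrix :: "nat \<Rightarrow> nat \<Rightarrow> nat \<Rightarrow> nat \<Rightarrow> coord \<Rightarrow> coord \<Rightarrow> real" where
  "block_matrix K v S d (Main k a) (Main k' a') =
     (if k = k' then h1 K v S d * Mmat v a a' else 0)"
| "block_matrix K v S d (Int2 k l a b) (Int2 k' l' a' b') =
     (if (k, l) = (k', l') then h2 K v S d * (Mmat v a a' * Mmat v b b') else 0)"
| "block_matrix K v S d (Int3 k l m a b c) (Int3 k' l' m' a' b' c') =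
     (if (k, l, m) = (k', l', m') then h3 K v S d * (Mmat v a a' * Mmat v b b' * Mmat v c c') else 0)"
| "block_matrix K v S d _ _ = 0"

end

(* The pairs of depth d split into disjoint blocks, one for each set A of S active attributes
   and set D of d differing attributes within A; inside a block the two profiles range
   independently over the attributes (equal levels on A - D, distinct levels on D, level 0
   outside A).  Each coordinate of f is a product of one factor per attribute, so the sum of
   (f(i) - f(j)) (f(i) - f(j))' over a block factors into per-attribute sums.  These vanish unless
   both coordinates involve the same set T of attributes, and otherwise depend on the block only
   through T \<subseteq> A and b = |T \<inter> D|.  Averaging over the blocks is a hypergeometric count,
   and evaluating the resulting sums for |T| = 1, 2, 3 gives h1, h2, h3. *)

theory Submission
  imports Defs
begin

lemma sum_f1:
  assumes "1 \<le> a" "a < v"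
  shows "(\<Sum>l\<in>{1..v}. f1 v l a) = 0"
proof -
  have "(\<Sum>l\<in>{1..v}. f1 v l a) = (\<Sum>l\<in>{1..v}. (if l = a then 1 else 0) - (if l = v then 1 else 0))"
    using assms by (intro sum.cong) (auto simp: f1_def)
  also have "\<dots> = 0"
    using assms by (simp add: sum_subtractf)
  finally show ?thesis .
qed

lemma sum_f1_mult:
  assumes "1 \<le> a" "a < v" "1 \<le> b" "b < v"
  shows "(\<Sum>l\<in>{1..v}. f1 v l a * f1 v l b) = (if a = b then 1 else 0) + 1"
proof -
  have "(\<Sum>l\<in>{1..v}. f1 v l a * f1 v l b) =
        (\<Sum>l\<in>{1..v}. (if l = a then (if a = b then 1 else 0) else 0) + (if l = v then 1 else 0))"
    using assms by (intro sum.cong) (auto simp: f1_def)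
  also have "\<dots> = (if a = b then 1 else 0) + 1"
    using assms by (simp add: sum.distrib)
  finally show ?thesis .
qed

definition level_pairs :: "nat \<Rightarrow> nat set \<Rightarrow> nat set \<Rightarrow> nat \<Rightarrow> (nat \<times> nat) set" where
  "level_pairs v A D t =
     (if t \<notin> A then {(0, 0)}
      else if t \<in> D then {1..v} \<times> {1..v} - Id_on {1..v}
      else Id_on {1..v})"

lemma finite_level_pairs: "finite (level_pairs v A D t)"
  by (auto simp: level_pairs_def Id_on_def)

lemma mem_level_pairs_iff:
  "(x, y) \<in> level_pairs v A D t \<longleftrightarrow>
     (if t \<in> A then x \<in> {1..v} \<and> y \<in> {1..v} \<and> (t \<in> D \<longleftrightarrow> x \<noteq> y) else x = 0 \<and> y = 0)"
  by (auto simp: level_pairs_def)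

lemma level_pairs_swap: "(l', l) \<in> level_pairs v A D t \<longleftrightarrow> (l, l') \<in> level_pairs v A D t"
  by (auto simp: level_pairs_def)

lemma sum_Id_on: "(\<Sum>z\<in>Id_on X. \<phi> z) = (\<Sum>x\<in>X. \<phi> (x, x))"
proof -
  have "Id_on X = (\<lambda>x. (x, x)) ` X" by (auto simp: Id_on_def)
  then show ?thesis by (simp add: sum.reindex inj_on_def)
qed

lemma sum_level_pairs:
  fixes \<phi> :: "nat \<times> nat \<Rightarrow> 'a::ab_group_add"
  shows "(\<Sum>z\<in>level_pairs v A D t. \<phi> z) =
     (if t \<notin> A then \<phi> (0, 0)
      else if t \<in> D then (\<Sum>l\<in>{1..v}. \<Sum>l'\<in>{1..v}. \<phi> (l, l')) - (\<Sum>l\<in>{1..v}. \<phi> (l, l))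
      else (\<Sum>l\<in>{1..v}. \<phi> (l, l)))"
proof -
  have "(\<Sum>z\<in>{1..v} \<times> {1..v} - Id_on {1..v}. \<phi> z) =
        (\<Sum>z\<in>{1..v} \<times> {1..v}. \<phi> z) - (\<Sum>z\<in>Id_on {1..v}. \<phi> z)"
    by (intro sum_diff) auto
  then show ?thesis
    by (simp add: level_pairs_def sum_Id_on sum.cartesian_product)
qed

lemma card_level_pairs:
  "real (card (level_pairs v A D t)) =
     (if t \<notin> A then 1 else if t \<in> D then real v * (real v - 1) else real v)"
  using sum_level_pairs[where \<phi> = "\<lambda>_. 1 :: real" and v = v and A = A and D = D and t = t]
  by (simp add: algebra_simps)

lemma pointwise_pairs_eq_image:
  fixes L :: "nat \<Rightarrow> ('a \<times> 'a) set"
  assumes out: "\<And>t. K \<le> t \<Longrightarrow> L t = {(c, c)}"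
  shows "{(i, j). \<forall>t. (i t, j t) \<in> L t} =
         (\<lambda>g. (\<lambda>t. if t < K then fst (g t) else c, \<lambda>t. if t < K then snd (g t) else c)) ` PiE {..<K} L"
    (is "?P = ?unzip ` _")
proof (intro equalityI subsetI)
  fix x assume "x \<in> ?P"
  then obtain i j where x: "x = (i, j)" and mem: "\<And>t. (i t, j t) \<in> L t" by auto
  have "restrict (\<lambda>t. (i t, j t)) {..<K} \<in> PiE {..<K} L" using mem by auto
  moreover have "i t = c" "j t = c" if "\<not> t < K" for t
  proof -
    have "L t = {(c, c)}" using out that by simp
    then show "i t = c" "j t = c" using mem[of t] by auto
  qed
  then have "?unzip (restrict (\<lambda>t. (i t, j t)) {..<K}) = x"
    by (auto simp: x fun_eq_iff)
  ultimately show "x \<in> ?unzip ` PiE {..<K} L" by blast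
next
  fix x assume "x \<in> ?unzip ` PiE {..<K} L"
  then show "x \<in> ?P" using out by (auto simp: PiE_iff not_less)
qed

lemma
  fixes L :: "nat \<Rightarrow> ('a \<times> 'a) set" and \<psi> :: "nat \<Rightarrow> 'a \<times> 'a \<Rightarrow> 'b::comm_semiring_1"
  assumes fin: "\<And>t. t < K \<Longrightarrow> finite (L t)" and out: "\<And>t. K \<le> t \<Longrightarrow> L t = {(c, c)}"
  shows finite_pointwise_pairs: "finite {(i, j). \<forall>t. (i t, j t) \<in> L t}"
    and sum_prod_pointwise_pairs:
      "(\<Sum>(i, j)\<in>{(i, j). \<forall>t. (i t, j t) \<in> L t}. \<Prod>t<K. \<psi> t (i t, j t)) = (\<Prod>t<K. \<Sum>z\<in>L t. \<psi> t z)"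
proof -
  define unzip where
    "unzip g = (\<lambda>t. if t < K then fst (g t) else c, \<lambda>t. if t < K then snd (g t) else c)"
    for g :: "nat \<Rightarrow> 'a \<times> 'a"
  have img: "{(i, j). \<forall>t. (i t, j t) \<in> L t} = unzip ` PiE {..<K} L"
    unfolding unzip_def by (rule pointwise_pairs_eq_image[OF out])
  have inj: "inj_on unzip (PiE {..<K} L)"
  proof (rule inj_onI)
    fix g g' assume g: "g \<in> PiE {..<K} L" and g': "g' \<in> PiE {..<K} L" and eq: "unzip g = unzip g'"
    have "g t = g' t" if "t < K" for t
    proof -
      have "fst (g t) = fst (g' t)"
        using arg_cong[OF eq, of "\<lambda>x. fst x t"] that by (simp add: unzip_def)
      moreover have "snd (g t) = snd (g' t)"
        using arg_cong[OF eq, of "\<lambda>x. snd x t"] that by (simp add: unzip_def)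
      ultimately show ?thesis by (simp add: prod_eq_iff)
    qed
    then show "g = g'" using g g' by (intro PiE_ext) auto
  qed
  show "finite {(i, j). \<forall>t. (i t, j t) \<in> L t}"
    unfolding img using fin by (auto intro!: finite_PiE)
  have "(\<Sum>(i, j)\<in>{(i, j). \<forall>t. (i t, j t) \<in> L t}. \<Prod>t<K. \<psi> t (i t, j t)) =
        (\<Sum>g\<in>PiE {..<K} L. \<Prod>t<K. \<psi> t (g t))"
    unfolding img sum.reindex[OF inj] by (intro sum.cong refl prod.cong) (simp_all add: unzip_def)
  also have "\<dots> = (\<Prod>t<K. \<Sum>z\<in>L t. \<psi> t z)"
    using fin by (intro prod_sum_PiE[symmetric]) auto
  finally show "(\<Sum>(i, j)\<in>{(i, j). \<forall>t. (i t, j t) \<in> L t}. \<Prod>t<K. \<psi> t (i t, j t)) =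
      (\<Prod>t<K. \<Sum>z\<in>L t. \<psi> t z)" .
qed

definition pattern_pairs :: "nat \<Rightarrow> nat set \<Rightarrow> nat set \<Rightarrow> (profile \<times> profile) set" where
  "pattern_pairs v A D = {(i, j). \<forall>t. (i t, j t) \<in> level_pairs v A D t}"

definition attr_patterns :: "nat \<Rightarrow> nat \<Rightarrow> nat \<Rightarrow> (nat set \<times> nat set) set" where
  "attr_patterns K S d = {(A, D). A \<subseteq> {..<K} \<and> card A = S \<and> D \<subseteq> A \<and> card D = d}"

lemma
  fixes \<psi> :: "nat \<Rightarrow> nat \<times> nat \<Rightarrow> 'a::comm_semiring_1"
  assumes "A \<subseteq> {..<K}"
  shows finite_pattern_pairs: "finite (pattern_pairs v A D)"
    and sum_prod_pattern_pairs:
      "(\<Sum>(i, j)\<in>pattern_pairs v A D. \<Prod>t<K. \<psi> t (i t, j t)) =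
       (\<Prod>t<K. \<Sum>z\<in>level_pairs v A D t. \<psi> t z)"
proof -
  have beyond: "level_pairs v A D t = {(0, 0)}" if "K \<le> t" for t
    using assms that by (auto simp: level_pairs_def)
  show "finite (pattern_pairs v A D)"
    unfolding pattern_pairs_def
    using finite_pointwise_pairs[where L = "level_pairs v A D" and c = 0, OF finite_level_pairs beyond] .
  show "(\<Sum>(i, j)\<in>pattern_pairs v A D. \<Prod>t<K. \<psi> t (i t, j t)) =
        (\<Prod>t<K. \<Sum>z\<in>level_pairs v A D t. \<psi> t z)"
    unfolding pattern_pairs_def
    using sum_prod_pointwise_pairs[where L = "level_pairs v A D" and c = 0, OF finite_level_pairs beyond] .
qed

lemma pattern_pairs_determine_pattern:
  assumes "(i, j) \<in> pattern_pairs v A D" and "D \<subseteq> A"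
  shows "A = {t. i t \<noteq> 0}" and "D = {t. i t \<noteq> j t}"
proof -
  have mem: "(i t, j t) \<in> level_pairs v A D t" for t
    using assms(1) by (simp add: pattern_pairs_def)
  show "A = {t. i t \<noteq> 0}"
  proof (rule set_eqI)
    fix t show "t \<in> A \<longleftrightarrow> t \<in> {t. i t \<noteq> 0}"
      using mem[of t] by (cases "t \<in> A") (auto simp: mem_level_pairs_iff)
  qed
  show "D = {t. i t \<noteq> j t}"
  proof (rule set_eqI)
    fix t show "t \<in> D \<longleftrightarrow> t \<in> {t. i t \<noteq> j t}"
      using mem[of t] assms(2) by (cases "t \<in> A") (auto simp: mem_level_pairs_iff)
  qed
qed

lemma design_region_d_subset_UNION:
  "design_region_d K v S d \<subseteq> (\<Union>(A, D)\<in>attr_patterns K S d. pattern_pairs v A D)"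
proof
  fix x assume "x \<in> design_region_d K v S d"
  then obtain i j A where x: "x = (i, j)"
    and prof: "i \<in> profiles K v" "j \<in> profiles K v"
    and A: "A \<subseteq> {..<K}" "card A = S"
    and levels: "\<forall>k<K. (k \<in> A \<longrightarrow> i k \<in> {1..v} \<and> j k \<in> {1..v}) \<and> (k \<notin> A \<longrightarrow> i k = 0 \<and> j k = 0)"
    and depth: "card {k. k < K \<and> i k \<noteq> j k} = d"
    by (auto simp: design_region_d_def design_region_def)
  define D where "D = {k. k < K \<and> i k \<noteq> j k}"
  have "D \<subseteq> A" using levels by (auto simp: D_def)
  then have "(A, D) \<in> attr_patterns K S d"
    using A depth by (simp add: attr_patterns_def D_def)
  moreover have "(i t, j t) \<in> level_pairs v A D t" for t
  proof (cases "t < K")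
    case True
    then show ?thesis using levels by (auto simp: mem_level_pairs_iff D_def)
  next
    case False
    then show ?thesis using A prof by (auto simp: mem_level_pairs_iff profiles_def)
  qed
  ultimately show "x \<in> (\<Union>(A, D)\<in>attr_patterns K S d. pattern_pairs v A D)"
    by (auto simp: x pattern_pairs_def)
qed

lemma pattern_pairs_subset_design_region_d:
  assumes AD: "(A, D) \<in> attr_patterns K S d"
  shows "pattern_pairs v A D \<subseteq> design_region_d K v S d"
proof (clarify)
  fix i j assume ij: "(i, j) \<in> pattern_pairs v A D"
  have A: "A \<subseteq> {..<K}" "card A = S" "D \<subseteq> A" "card D = d"
    using AD by (auto simp: attr_patterns_def)
  have mem: "(i t, j t) \<in> level_pairs v A D t" for t
    using ij by (simp add: pattern_pairs_def)
  have levels: "(k \<in> A \<longrightarrow> i k \<in> {1..v} \<and> j k \<in> {1..v}) \<and> (k \<notin> A \<longrightarrow> i k = 0 \<and> j k = 0)" for k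
    using mem[of k] by (cases "k \<in> A") (simp_all add: mem_level_pairs_iff)
  have "i k \<le> v \<and> j k \<le> v" for k
    using levels[of k] by (cases "k \<in> A") auto
  moreover have "i k = 0 \<and> j k = 0" if "K \<le> k" for k
    using levels[of k] A(1) that by auto
  ultimately have "i \<in> profiles K v" "j \<in> profiles K v"
    by (simp_all add: profiles_def)
  moreover have "{k. k < K \<and> i k \<noteq> j k} = D"
    using pattern_pairs_determine_pattern(2)[OF ij A(3)] A(1,3) by auto
  moreover have "\<exists>A. A \<subseteq> {..<K} \<and> card A = S \<and>
      (\<forall>k<K. (k \<in> A \<longrightarrow> i k \<in> {1..v} \<and> j k \<in> {1..v}) \<and> (k \<notin> A \<longrightarrow> i k = 0 \<and> j k = 0))"
    using A levels by blast
  ultimately show "(i, j) \<in> design_region_d K v S d"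
    using A(4) by (simp add: design_region_d_def design_region_def)
qed

lemma design_region_d_eq_UNION:
  "design_region_d K v S d = (\<Union>(A, D)\<in>attr_patterns K S d. pattern_pairs v A D)"
  using design_region_d_subset_UNION pattern_pairs_subset_design_region_d by fast

lemma finite_attr_patterns: "finite (attr_patterns K S d)"
  by (rule finite_subset[of _ "Pow {..<K} \<times> Pow {..<K}"]) (auto simp: attr_patterns_def)

lemma pattern_pairs_disjoint:
  assumes "(A, D) \<in> attr_patterns K S d" "(A', D') \<in> attr_patterns K S d" "(A, D) \<noteq> (A', D')"
  shows "pattern_pairs v A D \<inter> pattern_pairs v A' D' = {}"
proof (rule ccontr)
  assume "pattern_pairs v A D \<inter> pattern_pairs v A' D' \<noteq> {}"
  then obtain i j where ij: "(i, j) \<in> pattern_pairs v A D" "(i, j) \<in> pattern_pairs v A' D'"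
    by auto
  have "D \<subseteq> A" "D' \<subseteq> A'" using assms(1,2) by (auto simp: attr_patterns_def)
  then have "A = A'" "D = D'"
    using pattern_pairs_determine_pattern[OF ij(1)] pattern_pairs_determine_pattern[OF ij(2)] by simp_all
  with assms(3) show False by simp
qed

lemma sum_design_region_d:
  "(\<Sum>x\<in>design_region_d K v S d. F x) =
   (\<Sum>(A, D)\<in>attr_patterns K S d. \<Sum>x\<in>pattern_pairs v A D. F x)"
proof -
  have "(\<Sum>x\<in>(\<Union>(A, D)\<in>attr_patterns K S d. pattern_pairs v A D). F x) =
        (\<Sum>p\<in>attr_patterns K S d. \<Sum>x\<in>case_prod (pattern_pairs v) p. F x)"
  proof (rule sum.UNION_disjoint[OF finite_attr_patterns])
    show "\<forall>p\<in>attr_patterns K S d. finite (case_prod (pattern_pairs v) p)"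
      by (auto simp: attr_patterns_def intro: finite_pattern_pairs)
    show "\<forall>p\<in>attr_patterns K S d. \<forall>q\<in>attr_patterns K S d. p \<noteq> q \<longrightarrow>
        case_prod (pattern_pairs v) p \<inter> case_prod (pattern_pairs v) q = {}"
      using pattern_pairs_disjoint by fast
  qed
  then show ?thesis
    by (simp add: design_region_d_eq_UNION case_prod_unfold)
qed

lemma finite_design_region_d: "finite (design_region_d K v S d)"
  unfolding design_region_d_eq_UNION
  by (intro finite_UN_I finite_attr_patterns) (auto simp: attr_patterns_def intro: finite_pattern_pairs)

fun coord_level :: "coord \<Rightarrow> nat \<Rightarrow> nat option" where
  "coord_level (Main k a) t = (if t = k then Some a else None)"
| "coord_level (Int2 k l a b) t = (if t = k then Some a else if t = l then Some b else None)"
| "coord_level (Int3 k l m a b c) t =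
     (if t = k then Some a else if t = l then Some b else if t = m then Some c else None)"

fun coord_attrs :: "coord \<Rightarrow> nat set" where
  "coord_attrs (Main k a) = {k}"
| "coord_attrs (Int2 k l a b) = {k, l}"
| "coord_attrs (Int3 k l m a b c) = {k, l, m}"

definition coord_factor :: "nat \<Rightarrow> coord \<Rightarrow> nat \<Rightarrow> nat \<Rightarrow> real" where
  "coord_factor v p t l = (case coord_level p t of None \<Rightarrow> 1 | Some a \<Rightarrow> f1 v l a)"

definition coord_gram :: "nat \<Rightarrow> coord \<Rightarrow> coord \<Rightarrow> nat \<Rightarrow> real" where
  "coord_gram v p q t = (real v - 1) / 2 * Mmat v (the (coord_level p t)) (the (coord_level q t))"

lemma mem_coord_attrs_iff: "t \<in> coord_attrs p \<longleftrightarrow> coord_level p t \<noteq> None"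
  by (cases p) auto

lemma finite_coord_attrs: "finite (coord_attrs p)"
  by (cases p) auto

lemma coord_attrs_subset: "p \<in> coords K v \<Longrightarrow> coord_attrs p \<subseteq> {..<K}"
  by (auto simp: coords_def)

lemma coord_level_range: "p \<in> coords K v \<Longrightarrow> coord_level p t = Some a \<Longrightarrow> 1 \<le> a \<and> a \<le> v - 1"
  by (auto simp: coords_def split: if_splits)

lemma fvec_eq_prod:
  assumes "p \<in> coords K v"
  shows "fvec v i p = (\<Prod>t<K. coord_factor v p t (i t))"
proof -
  have "(\<Prod>t<K. coord_factor v p t (i t)) = (\<Prod>t\<in>coord_attrs p. coord_factor v p t (i t))"
    using coord_attrs_subset[OF assms]
    by (intro prod.mono_neutral_right) (auto simp: coord_factor_def mem_coord_attrs_iff)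
  also have "\<dots> = fvec v i p"
    using assms by (cases p) (auto simp: coords_def coord_factor_def)
  finally show ?thesis by simp
qed

lemma coord_factor_zero: "coord_factor v p t 0 = (if t \<in> coord_attrs p then 0 else 1)"
  by (cases "coord_level p t") (auto simp: coord_factor_def f1_def mem_coord_attrs_iff)

lemma sum_coord_factor:
  assumes "p \<in> coords K v" "v \<ge> 2"
  shows "(\<Sum>l\<in>{1..v}. coord_factor v p t l) = (if t \<in> coord_attrs p then 0 else real v)"
proof (cases "coord_level p t")
  case None
  moreover have "t \<notin> coord_attrs p" using None by (simp add: mem_coord_attrs_iff)
  ultimately show ?thesis by (simp add: coord_factor_def)
next
  case (Some a)
  then have "1 \<le> a" "a < v" using coord_level_range[OF assms(1)] assms(2) by fastforce+
  moreover have "t \<in> coord_attrs p" using Some by (simp add: mem_coord_attrs_iff)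
  ultimately show ?thesis using Some sum_f1 by (simp add: coord_factor_def)
qed

lemma sum_coord_factor_mult:
  assumes "p \<in> coords K v" "q \<in> coords K v" "v \<ge> 2"
  shows "(\<Sum>l\<in>{1..v}. coord_factor v p t l * coord_factor v q t l) =
    (if t \<in> coord_attrs p \<and> t \<in> coord_attrs q
     then coord_gram v p q t
     else if t \<notin> coord_attrs p \<and> t \<notin> coord_attrs q then real v else 0)"
proof (cases "coord_level p t")
  case None
  moreover have "t \<notin> coord_attrs p" using None by (simp add: mem_coord_attrs_iff)
  ultimately show ?thesis
    using sum_coord_factor[OF assms(2,3), of t] by (simp add: coord_factor_def)
next
  case (Some a)
  have a: "1 \<le> a" "a < v" using coord_level_range[OF assms(1) Some] assms(3) by auto
  have tp: "t \<in> coord_attrs p" using Some by (simp add: mem_coord_attrs_iff)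
  show ?thesis
  proof (cases "coord_level q t")
    case None
    moreover have "t \<notin> coord_attrs q" using None by (simp add: mem_coord_attrs_iff)
    ultimately show ?thesis using Some tp sum_f1[OF a] by (simp add: coord_factor_def)
  next
    case (Some b)
    have b: "1 \<le> b" "b < v" using coord_level_range[OF assms(2) Some] assms(3) by auto
    have tq: "t \<in> coord_attrs q" using Some by (simp add: mem_coord_attrs_iff)
    have "real v - 1 \<noteq> 0" using assms(3) by simp
    then have "(real v - 1) / 2 * Mmat v a b = (if a = b then 1 else 0) + 1"
      by (simp add: Mmat_def field_simps)
    then show ?thesis using Some \<open>coord_level p t = Some a\<close> tp tq sum_f1_mult[OF a b]
      by (simp add: coord_factor_def coord_gram_def)
  qed
qed

definition attr_moment :: "nat \<Rightarrow> nat set \<Rightarrow> nat set \<Rightarrow> coord \<Rightarrow> coord \<Rightarrow> nat \<Rightarrow> real" where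
  "attr_moment v A D p q t =
     (\<Sum>z\<in>level_pairs v A D t. coord_factor v p t (fst z) * coord_factor v q t (fst z))"

definition attr_cross_moment :: "nat \<Rightarrow> nat set \<Rightarrow> nat set \<Rightarrow> coord \<Rightarrow> coord \<Rightarrow> nat \<Rightarrow> real" where
  "attr_cross_moment v A D p q t =
     (\<Sum>z\<in>level_pairs v A D t. coord_factor v p t (fst z) * coord_factor v q t (snd z))"

lemma sum_pattern_pairs_swap:
  "(\<Sum>x\<in>pattern_pairs v A D. g (snd x, fst x)) = (\<Sum>x\<in>pattern_pairs v A D. g x)"
  by (rule sum.reindex_bij_witness[where i = prod.swap and j = prod.swap])
    (auto simp: pattern_pairs_def level_pairs_swap)

(* The two mixed terms of (f(i) - f(j)) (f(i) - f(j))' agree because blocks are symmetric in i, j. *)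
lemma sum_pattern_pairs_info_term:
  assumes p: "p \<in> coords K v" and q: "q \<in> coords K v" and A: "A \<subseteq> {..<K}"
  shows "(\<Sum>x\<in>pattern_pairs v A D.
            (fvec v (fst x) p - fvec v (snd x) p) * (fvec v (fst x) q - fvec v (snd x) q)) =
    2 * (\<Prod>t<K. attr_moment v A D p q t) - 2 * (\<Prod>t<K. attr_cross_moment v A D p q t)"
proof -
  let ?Y = "pattern_pairs v A D"
  define F where "F x = fvec v (fst x) p * fvec v (fst x) q" for x :: "profile \<times> profile"
  define G where "G x = fvec v (fst x) p * fvec v (snd x) q" for x :: "profile \<times> profile"
  have "(\<Sum>x\<in>?Y. (fvec v (fst x) p - fvec v (snd x) p) * (fvec v (fst x) q - fvec v (snd x) q)) =
        (\<Sum>x\<in>?Y. F x + F (snd x, fst x) - G x - G (snd x, fst x))"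
    by (intro sum.cong) (auto simp: F_def G_def algebra_simps)
  also have "\<dots> = 2 * (\<Sum>x\<in>?Y. F x) - 2 * (\<Sum>x\<in>?Y. G x)"
    by (simp add: sum.distrib sum_subtractf sum_pattern_pairs_swap)
  also have "(\<Sum>x\<in>?Y. F x) = (\<Prod>t<K. attr_moment v A D p q t)"
    using sum_prod_pattern_pairs[OF A, of "\<lambda>t z. coord_factor v p t (fst z) * coord_factor v q t (fst z)"]
    by (simp add: F_def attr_moment_def fvec_eq_prod[OF p] fvec_eq_prod[OF q] prod.distrib case_prod_unfold)
  also have "(\<Sum>x\<in>?Y. G x) = (\<Prod>t<K. attr_cross_moment v A D p q t)"
    using sum_prod_pattern_pairs[OF A, of "\<lambda>t z. coord_factor v p t (fst z) * coord_factor v q t (snd z)"]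
    by (simp add: G_def attr_cross_moment_def fvec_eq_prod[OF p] fvec_eq_prod[OF q] prod.distrib
        case_prod_unfold)
  finally show ?thesis .
qed

lemma
  fixes g h :: "nat \<Rightarrow> real"
  shows sum_level_pairs_diag: "(\<Sum>z\<in>level_pairs v A D t. g (fst z) * h (fst z)) =
      (if t \<notin> A then g 0 * h 0
       else if t \<in> D then (real v - 1) * (\<Sum>l\<in>{1..v}. g l * h l)
       else (\<Sum>l\<in>{1..v}. g l * h l))"
    and sum_level_pairs_cross: "(\<Sum>z\<in>level_pairs v A D t. g (fst z) * h (snd z)) =
      (if t \<notin> A then g 0 * h 0
       else if t \<in> D then (\<Sum>l\<in>{1..v}. g l) * (\<Sum>l\<in>{1..v}. h l) - (\<Sum>l\<in>{1..v}. g l * h l)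
       else (\<Sum>l\<in>{1..v}. g l * h l))"
  by (simp_all add: sum_level_pairs sum_product sum_distrib_left[symmetric] algebra_simps)

lemma attr_moments_outside:
  assumes "p \<in> coords K v" "q \<in> coords K v" "v \<ge> 2"
    and "t \<notin> coord_attrs p" "t \<notin> coord_attrs q"
  shows "attr_moment v A D p q t = real (card (level_pairs v A D t))"
    and "attr_cross_moment v A D p q t = real (card (level_pairs v A D t))"
  unfolding attr_moment_def attr_cross_moment_def sum_level_pairs_diag sum_level_pairs_cross
    sum_coord_factor_mult[OF assms(1-3)] sum_coord_factor[OF assms(1,3)] sum_coord_factor[OF assms(2,3)]
  using assms by (simp_all add: card_level_pairs coord_factor_zero algebra_simps)

lemma attr_moments_mixed:
  assumes "p \<in> coords K v" "q \<in> coords K v" "v \<ge> 2"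
    and "(t \<in> coord_attrs p) \<noteq> (t \<in> coord_attrs q)"
  shows "attr_moment v A D p q t = 0" and "attr_cross_moment v A D p q t = 0"
  unfolding attr_moment_def attr_cross_moment_def sum_level_pairs_diag sum_level_pairs_cross
    sum_coord_factor_mult[OF assms(1-3)] sum_coord_factor[OF assms(1,3)] sum_coord_factor[OF assms(2,3)]
  using assms by (auto simp: coord_factor_zero)

lemma attr_moments_inside:
  assumes "p \<in> coords K v" "q \<in> coords K v" "v \<ge> 2"
    and "t \<in> coord_attrs p" "t \<in> coord_attrs q"
  shows "attr_moment v A D p q t =
           (if t \<in> A then real (card (level_pairs v A D t)) * coord_gram v p q t / real v else 0)"
    and "attr_cross_moment v A D p q t =
           (if t \<in> A then real (card (level_pairs v A D t)) * coord_gram v p q t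
              * (if t \<in> D then - 1 / (real v - 1) else 1) / real v else 0)"
proof -
  have "real v \<noteq> 0" "real v - 1 \<noteq> 0" using assms(3) by auto
  then show "attr_moment v A D p q t =
           (if t \<in> A then real (card (level_pairs v A D t)) * coord_gram v p q t / real v else 0)"
    and "attr_cross_moment v A D p q t =
           (if t \<in> A then real (card (level_pairs v A D t)) * coord_gram v p q t
              * (if t \<in> D then - 1 / (real v - 1) else 1) / real v else 0)"
    unfolding attr_moment_def attr_cross_moment_def sum_level_pairs_diag sum_level_pairs_cross
      sum_coord_factor_mult[OF assms(1-3)] sum_coord_factor[OF assms(1,3)] sum_coord_factor[OF assms(2,3)]
    using assms by (simp_all add: card_level_pairs coord_factor_zero field_simps)
qed

lemma sum_pattern_pairs_info_term_distinct_attrs: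
  assumes p: "p \<in> coords K v" and q: "q \<in> coords K v" and v: "v \<ge> 2" and A: "A \<subseteq> {..<K}"
    and ne: "coord_attrs p \<noteq> coord_attrs q"
  shows "(\<Sum>x\<in>pattern_pairs v A D.
            (fvec v (fst x) p - fvec v (snd x) p) * (fvec v (fst x) q - fvec v (snd x) q)) = 0"
proof -
  obtain t where t: "(t \<in> coord_attrs p) \<noteq> (t \<in> coord_attrs q)" using ne by blast
  then have "t < K" using coord_attrs_subset[OF p] coord_attrs_subset[OF q] by blast
  then have z1: "(\<Prod>t<K. attr_moment v A D p q t) = 0"
    and z2: "(\<Prod>t<K. attr_cross_moment v A D p q t) = 0"
    using attr_moments_mixed[OF p q v t] by (auto intro!: prod_zero bexI[of _ t])
  show ?thesis
    unfolding sum_pattern_pairs_info_term[OF p q A] z1 z2 by simp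
qed

lemma prod_attr_moments_inside:
  assumes p: "p \<in> coords K v" and q: "q \<in> coords K v" and v: "v \<ge> 2"
    and eq: "coord_attrs q = coord_attrs p" and TA: "coord_attrs p \<subseteq> A"
  shows "(\<Prod>t\<in>coord_attrs p. attr_moment v A D p q t) =
      (\<Prod>t\<in>coord_attrs p. real (card (level_pairs v A D t))) * (\<Prod>t\<in>coord_attrs p. coord_gram v p q t) /
      real v ^ card (coord_attrs p)"
    and "(\<Prod>t\<in>coord_attrs p. attr_cross_moment v A D p q t) =
      (\<Prod>t\<in>coord_attrs p. real (card (level_pairs v A D t))) * (\<Prod>t\<in>coord_attrs p. coord_gram v p q t) *
      (- 1 / (real v - 1)) ^ card (coord_attrs p \<inter> D) / real v ^ card (coord_attrs p)"
proof -
  let ?T = "coord_attrs p" and ?m = "\<lambda>t. real (card (level_pairs v A D t))"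
  have "(\<Prod>t\<in>?T. attr_moment v A D p q t) = (\<Prod>t\<in>?T. ?m t * coord_gram v p q t / real v)"
    using attr_moments_inside[OF p q v] eq TA by (intro prod.cong) auto
  then show "(\<Prod>t\<in>?T. attr_moment v A D p q t) =
      (\<Prod>t\<in>?T. ?m t) * (\<Prod>t\<in>?T. coord_gram v p q t) / real v ^ card ?T"
    by (simp add: prod.distrib prod_dividef)
  have "(\<Prod>t\<in>?T. attr_cross_moment v A D p q t) =
      (\<Prod>t\<in>?T. ?m t * coord_gram v p q t * (if t \<in> D then - 1 / (real v - 1) else 1) / real v)"
    using attr_moments_inside[OF p q v] eq TA by (intro prod.cong) auto
  then show "(\<Prod>t\<in>?T. attr_cross_moment v A D p q t) =
      (\<Prod>t\<in>?T. ?m t) * (\<Prod>t\<in>?T. coord_gram v p q t) *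
      (- 1 / (real v - 1)) ^ card (?T \<inter> D) / real v ^ card ?T"
    using finite_coord_attrs[of p] by (simp add: prod.distrib prod_dividef prod.If_cases Int_def)
qed

lemma sum_pattern_pairs_info_term_same_attrs:
  assumes p: "p \<in> coords K v" and q: "q \<in> coords K v" and v: "v \<ge> 2" and A: "A \<subseteq> {..<K}"
    and eq: "coord_attrs q = coord_attrs p"
  shows "(\<Sum>x\<in>pattern_pairs v A D.
            (fvec v (fst x) p - fvec v (snd x) p) * (fvec v (fst x) q - fvec v (snd x) q)) =
    2 * (\<Prod>t<K. real (card (level_pairs v A D t))) * (\<Prod>t\<in>coord_attrs p. coord_gram v p q t) *
    (if coord_attrs p \<subseteq> A
     then (1 - (- 1 / (real v - 1)) ^ card (coord_attrs p \<inter> D)) / real v ^ card (coord_attrs p)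
     else 0)"
proof -
  define T where "T = coord_attrs p"
  define m where "m t = real (card (level_pairs v A D t))" for t
  have split: "(\<Prod>t<K. f t) = (\<Prod>t\<in>{..<K} - T. f t) * (\<Prod>t\<in>T. f t)" for f :: "nat \<Rightarrow> real"
    using coord_attrs_subset[OF p] by (simp add: T_def prod.subset_diff)
  have "(\<Prod>t\<in>{..<K} - T. attr_moment v A D p q t) = (\<Prod>t\<in>{..<K} - T. m t)"
    and "(\<Prod>t\<in>{..<K} - T. attr_cross_moment v A D p q t) = (\<Prod>t\<in>{..<K} - T. m t)"
    using attr_moments_outside[OF p q v] eq by (auto intro!: prod.cong simp: T_def m_def)
  then have info: "(\<Sum>x\<in>pattern_pairs v A D.
      (fvec v (fst x) p - fvec v (snd x) p) * (fvec v (fst x) q - fvec v (snd x) q)) =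
      2 * (\<Prod>t\<in>{..<K} - T. m t) *
      ((\<Prod>t\<in>T. attr_moment v A D p q t) - (\<Prod>t\<in>T. attr_cross_moment v A D p q t))"
    unfolding sum_pattern_pairs_info_term[OF p q A] split[of "attr_moment v A D p q"]
      split[of "attr_cross_moment v A D p q"] by (simp add: algebra_simps)
  show ?thesis
  proof (cases "T \<subseteq> A")
    case True
    have "(\<Prod>t<K. m t) = (\<Prod>t\<in>{..<K} - T. m t) * (\<Prod>t\<in>T. m t)" by (rule split)
    moreover have "real v ^ card T \<noteq> 0" using v by simp
    ultimately show ?thesis
      unfolding info prod_attr_moments_inside[OF p q v eq True[unfolded T_def], folded T_def] using True
      by (simp add: T_def[symmetric] m_def[symmetric] field_simps)
  next
    case False
    then obtain t where t: "t \<in> T" "t \<notin> A" by blast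
    then have "attr_moment v A D p q t = 0" "attr_cross_moment v A D p q t = 0"
      using attr_moments_inside[OF p q v] eq by (auto simp: T_def)
    then have "(\<Prod>t\<in>T. attr_moment v A D p q t) = 0" "(\<Prod>t\<in>T. attr_cross_moment v A D p q t) = 0"
      using finite_coord_attrs[of p] t by (auto simp: T_def intro: prod_zero)
    then show ?thesis
      unfolding info using False by (simp add: T_def)
  qed
qed

lemma choose_mult_swap: "(n choose x) * ((n - x) choose y) = (n choose y) * ((n - y) choose x)"
proof (cases "x + y \<le> n")
  case True
  have "(n choose x) * ((n - x) choose y) = (n choose (x + y)) * ((x + y) choose x)"
    using choose_mult[of x "x + y" n] True by simp
  also have "\<dots> = (n choose (x + y)) * ((x + y) choose y)"
    using binomial_symmetric[of x "x + y"] by simp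
  also have "\<dots> = (n choose y) * ((n - y) choose x)"
    using choose_mult[of y "x + y" n] True by (simp add: add.commute)
  finally show ?thesis .
next
  case False
  then have "(n choose x) * ((n - x) choose y) = 0" "(n choose y) * ((n - y) choose x) = 0"
    by (auto simp: binomial_eq_0_iff)
  then show ?thesis by (simp only:)
qed

(* Both sides count the triples (A, D, T) with T \<subseteq> A, |T| = t and |T \<inter> D| = b. *)
lemma choose_double_count:
  assumes "b \<le> t" "t \<le> S" "S \<le> K" "b \<le> d" "d \<le> S"
  shows "(K choose t) * (t choose b) * ((K - t) choose (S - t)) * ((S - t) choose (d - b)) =
         (K choose S) * (S choose d) * (d choose b) * ((S - d) choose (t - b))"
proof -
  have KS: "(K choose S) * (S choose t) = (K choose t) * ((K - t) choose (S - t))"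
    using choose_mult assms by simp
  have Sd: "(S choose d) * (d choose b) = (S choose b) * ((S - b) choose (d - b))"
    using choose_mult assms by simp
  have St: "(S choose t) * (t choose b) = (S choose b) * ((S - b) choose (t - b))"
    using choose_mult assms by simp
  have swap: "((S - b) choose (d - b)) * ((S - d) choose (t - b)) =
              ((S - b) choose (t - b)) * ((S - t) choose (d - b))"
    using choose_mult_swap[of "S - b" "d - b" "t - b"] assms by (simp add: diff_diff_eq)
  have "(S choose t) * ((K choose t) * (t choose b) * ((K - t) choose (S - t)) * ((S - t) choose (d - b))) =
        (K choose S) * (S choose t) * (S choose b) * (((S - b) choose (t - b)) * ((S - t) choose (d - b)))"
    by (simp add: KS[symmetric] St[symmetric] ac_simps)
  also have "\<dots> = (S choose t) * ((K choose S) * (S choose d) * (d choose b) * ((S - d) choose (t - b)))"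
    by (simp add: swap[symmetric] Sd ac_simps)
  finally show ?thesis
    using assms by simp
qed

lemma card_nested_subsets:
  assumes "finite X"
  shows "card {(A, D). A \<subseteq> X \<and> card A = m \<and> D \<subseteq> A \<and> card D = n} = (card X choose m) * (m choose n)"
proof -
  have "{(A, D). A \<subseteq> X \<and> card A = m \<and> D \<subseteq> A \<and> card D = n} =
        Sigma {A. A \<subseteq> X \<and> card A = m} (\<lambda>A. {D. D \<subseteq> A \<and> card D = n})"
    by auto
  moreover have "finite A" if "A \<subseteq> X" for A
    using assms that finite_subset by blast
  ultimately show ?thesis
    using assms by (simp add: card_SigmaI n_subsets)
qed

lemma card_attr_patterns: "card (attr_patterns K S d) = (K choose S) * (S choose d)"
  using card_nested_subsets[of "{..<K}" S d] by (simp add: attr_patterns_def)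

lemma card_attr_patterns_through:
  assumes T: "T \<subseteq> {..<K}" and B: "B \<subseteq> T" and TS: "card T \<le> S" and Bd: "card B \<le> d"
  shows "card {(A, D) \<in> attr_patterns K S d. T \<subseteq> A \<and> T \<inter> D = B} =
     ((K - card T) choose (S - card T)) * ((S - card T) choose (d - card B))"
proof -
  have fT: "finite T" using T finite_subset by blast
  have fB: "finite B" using B fT finite_subset by blast
  define P where "P = {(A, D). A \<subseteq> {..<K} - T \<and> card A = S - card T \<and> D \<subseteq> A \<and> card D = d - card B}"
  have "bij_betw (\<lambda>(A, D). (A \<union> T, D \<union> B)) P {(A, D) \<in> attr_patterns K S d. T \<subseteq> A \<and> T \<inter> D = B}"
  proof (rule bij_betw_byWitness[where f' = "\<lambda>(A, D). (A - T, D - T)"])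
    show "\<forall>x\<in>P. (\<lambda>(A, D). (A - T, D - T)) ((\<lambda>(A, D). (A \<union> T, D \<union> B)) x) = x"
      using B by (auto simp: P_def)
    show "\<forall>y\<in>{(A, D) \<in> attr_patterns K S d. T \<subseteq> A \<and> T \<inter> D = B}.
            (\<lambda>(A, D). (A \<union> T, D \<union> B)) ((\<lambda>(A, D). (A - T, D - T)) y) = y"
      by (auto simp: attr_patterns_def)
    show "(\<lambda>(A, D). (A \<union> T, D \<union> B)) ` P \<subseteq> {(A, D) \<in> attr_patterns K S d. T \<subseteq> A \<and> T \<inter> D = B}"
    proof (rule image_subsetI)
      fix x assume "x \<in> P"
      then obtain A D where x: "x = (A, D)" and "(A, D) \<in> P" by (cases x) auto
      then have A: "A \<subseteq> {..<K} - T" "card A = S - card T" "D \<subseteq> A" "card D = d - card B"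
        by (auto simp: P_def)
      have fA: "finite A" using A(1) finite_subset by blast
      then have fD: "finite D" using A(3) finite_subset by blast
      have "card (A \<union> T) = card A + card T"
        using fA fT A(1) by (intro card_Un_disjoint) auto
      moreover have "card (D \<union> B) = card D + card B"
        using fD fB A(1,3) B by (intro card_Un_disjoint) auto
      ultimately have "card (A \<union> T) = S" "card (D \<union> B) = d"
        using A TS Bd by simp_all
      then show "(\<lambda>(A, D). (A \<union> T, D \<union> B)) x \<in> {(A, D) \<in> attr_patterns K S d. T \<subseteq> A \<and> T \<inter> D = B}"
        using A T B by (auto simp: x attr_patterns_def)
    qed
    show "(\<lambda>(A, D). (A - T, D - T)) ` {(A, D) \<in> attr_patterns K S d. T \<subseteq> A \<and> T \<inter> D = B} \<subseteq> P"
    proof (rule image_subsetI)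
      fix x assume "x \<in> {(A, D) \<in> attr_patterns K S d. T \<subseteq> A \<and> T \<inter> D = B}"
      then obtain A D where x: "x = (A, D)"
        and "(A, D) \<in> attr_patterns K S d" "T \<subseteq> A" "T \<inter> D = B"
        by (cases x) auto
      moreover have "finite A"
        using \<open>(A, D) \<in> attr_patterns K S d\<close> finite_subset by (auto simp: attr_patterns_def)
      moreover have "finite D"
        using \<open>(A, D) \<in> attr_patterns K S d\<close> \<open>finite A\<close> finite_subset by (auto simp: attr_patterns_def)
      ultimately show "(\<lambda>(A, D). (A - T, D - T)) x \<in> P"
        using fT unfolding x by (auto simp: P_def attr_patterns_def card_Diff_subset card_Diff_subset_Int Int_commute)
    qed
  qed
  then have "card {(A, D) \<in> attr_patterns K S d. T \<subseteq> A \<and> T \<inter> D = B} = card P"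
    by (simp add: bij_betw_same_card)
  also have "\<dots> = ((K - card T) choose (S - card T)) * ((S - card T) choose (d - card B))"
    unfolding P_def using card_nested_subsets[of "{..<K} - T"] T fT by (simp add: card_Diff_subset)
  finally show ?thesis .
qed

lemma card_attr_patterns_through_if:
  assumes T: "T \<subseteq> {..<K}" and B: "B \<subseteq> T" and TS: "card T \<le> S"
  shows "card {(A, D) \<in> attr_patterns K S d. T \<subseteq> A \<and> T \<inter> D = B} =
     (if card B \<le> d then ((K - card T) choose (S - card T)) * ((S - card T) choose (d - card B)) else 0)"
proof (cases "card B \<le> d")
  case True
  then show ?thesis using card_attr_patterns_through[OF T B TS True] by simp
next
  case False
  have "card B \<le> d" if "(A, D) \<in> attr_patterns K S d" "T \<inter> D = B" for A D
  proof -
    have "D \<subseteq> {..<K}" "card D = d" "B \<subseteq> D" using that by (auto simp: attr_patterns_def)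
    then show ?thesis by (metis card_mono finite_lessThan finite_subset)
  qed
  then have "{(A, D) \<in> attr_patterns K S d. T \<subseteq> A \<and> T \<inter> D = B} = {}"
    using False by blast
  then show ?thesis
    using False by (simp only: card.empty if_False)
qed

lemma choose_card_attr_patterns_through:
  assumes "b \<le> t" "t \<le> S" "S \<le> K" "d \<le> S"
  shows "real (t choose b) *
      real (if b \<le> d then ((K - t) choose (S - t)) * ((S - t) choose (d - b)) else 0) =
    real (card (attr_patterns K S d)) / real (K choose t) * (real (d choose b) * real ((S - d) choose (t - b)))"
proof -
  have "real (K choose t) * (real (t choose b) *
      real (if b \<le> d then ((K - t) choose (S - t)) * ((S - t) choose (d - b)) else 0)) =
    real (card (attr_patterns K S d)) * (real (d choose b) * real ((S - d) choose (t - b)))"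
  proof (cases "b \<le> d")
    case True
    then show ?thesis
      using choose_double_count[of b t S K d] assms
      unfolding card_attr_patterns by (simp flip: of_nat_mult add: ac_simps)
  qed simp
  moreover have "real (K choose t) \<noteq> 0" using assms by simp
  ultimately show ?thesis by (simp add: field_simps)
qed

lemma sum_Pow_by_card:
  fixes f :: "nat \<Rightarrow> 'a::comm_semiring_1"
  assumes "finite T"
  shows "(\<Sum>B\<in>Pow T. f (card B)) = (\<Sum>b\<le>card T. of_nat (card T choose b) * f b)"
proof -
  have "(\<Sum>B\<in>Pow T. f (card B)) = (\<Sum>b\<le>card T. \<Sum>B\<in>{B \<in> Pow T. card B = b}. f (card B))"
    using assms by (intro sum.group[symmetric]) (auto simp: card_mono)
  also have "\<dots> = (\<Sum>b\<le>card T. of_nat (card T choose b) * f b)"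
  proof (intro sum.cong refl)
    fix b
    have "card {B \<in> Pow T. card B = b} = card T choose b"
      using n_subsets[OF assms, of b] by (simp add: Pow_def conj_commute)
    then show "(\<Sum>B\<in>{B \<in> Pow T. card B = b}. f (card B)) = of_nat (card T choose b) * f b"
      by simp
  qed
  finally show ?thesis .
qed

(* For a uniformly random pattern (A, D): P(T \<subseteq> A, |T \<inter> D| = b) = C(d,b) C(S-d,|T|-b) / C(K,|T|). *)
lemma sum_attr_patterns_through:
  fixes \<gamma> :: "nat \<Rightarrow> real"
  assumes T: "T \<subseteq> {..<K}" and TS: "card T \<le> S" and SK: "S \<le> K" and dS: "d \<le> S"
  shows "(\<Sum>(A, D)\<in>attr_patterns K S d. if T \<subseteq> A then \<gamma> (card (T \<inter> D)) else 0) =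
    real (card (attr_patterns K S d)) / real (K choose card T) *
    (\<Sum>b\<le>card T. real (d choose b) * real ((S - d) choose (card T - b)) * \<gamma> b)"
proof -
  have fT: "finite T" using T finite_subset by blast
  define t where "t = card T"
  define cnt where
    "cnt b = (if b \<le> d then ((K - t) choose (S - t)) * ((S - t) choose (d - b)) else 0)" for b
  have "(\<Sum>(A, D)\<in>attr_patterns K S d. if T \<subseteq> A then \<gamma> (card (T \<inter> D)) else 0) =
        (\<Sum>B\<in>Pow T. \<Sum>x\<in>{x \<in> attr_patterns K S d. T \<inter> snd x = B}.
           if T \<subseteq> fst x then \<gamma> (card (T \<inter> snd x)) else 0)"
    using fT finite_attr_patterns
    by (subst sum.group[symmetric, where g = "\<lambda>x. T \<inter> snd x"]) (auto simp: case_prod_unfold)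
  also have "\<dots> = (\<Sum>B\<in>Pow T. \<gamma> (card B) * real (cnt (card B)))"
  proof (intro sum.cong refl)
    fix B assume B: "B \<in> Pow T"
    have "(\<Sum>x\<in>{x \<in> attr_patterns K S d. T \<inter> snd x = B}. if T \<subseteq> fst x then \<gamma> (card (T \<inter> snd x)) else 0) =
          (\<Sum>x\<in>{x \<in> attr_patterns K S d. T \<inter> snd x = B}. if T \<subseteq> fst x then \<gamma> (card B) else 0)"
      by (intro sum.cong) auto
    also have "\<dots> = \<gamma> (card B) * real (card {x \<in> {x \<in> attr_patterns K S d. T \<inter> snd x = B}. T \<subseteq> fst x})"
      using finite_attr_patterns by (simp add: sum.inter_filter[symmetric])
    also have "{x \<in> {x \<in> attr_patterns K S d. T \<inter> snd x = B}. T \<subseteq> fst x} =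
               {(A, D) \<in> attr_patterns K S d. T \<subseteq> A \<and> T \<inter> D = B}"
      by auto
    also have "card {(A, D) \<in> attr_patterns K S d. T \<subseteq> A \<and> T \<inter> D = B} = cnt (card B)"
      using card_attr_patterns_through_if[OF T _ TS] B by (simp add: cnt_def t_def)
    finally show "(\<Sum>x\<in>{x \<in> attr_patterns K S d. T \<inter> snd x = B}.
        if T \<subseteq> fst x then \<gamma> (card (T \<inter> snd x)) else 0) = \<gamma> (card B) * real (cnt (card B))" .
  qed
  also have "\<dots> = (\<Sum>b\<le>t. real (t choose b) * (\<gamma> b * real (cnt b)))"
    unfolding t_def by (rule sum_Pow_by_card[OF fT])
  also have "\<dots> = (\<Sum>b\<le>t. real (card (attr_patterns K S d)) / real (K choose t) *
                      (real (d choose b) * real ((S - d) choose (t - b)) * \<gamma> b))"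
  proof (intro sum.cong refl)
    fix b assume "b \<in> {..t}"
    then have "real (t choose b) * real (cnt b) = real (card (attr_patterns K S d)) / real (K choose t) *
        (real (d choose b) * real ((S - d) choose (t - b)))"
      unfolding cnt_def t_def using choose_card_attr_patterns_through TS SK dS by simp
    then have "real (t choose b) * (\<gamma> b * real (cnt b)) = \<gamma> b * (real (card (attr_patterns K S d)) /
        real (K choose t) * (real (d choose b) * real ((S - d) choose (t - b))))"
      by (simp only: mult.left_commute)
    then show "real (t choose b) * (\<gamma> b * real (cnt b)) = real (card (attr_patterns K S d)) /
        real (K choose t) * (real (d choose b) * real ((S - d) choose (t - b)) * \<gamma> b)"
      by (simp only: ac_simps)
  qed
  finally show ?thesis
    by (simp add: t_def sum_distrib_left mult.assoc)
qed

(* h_t for interactions of order t; b counts the attributes of the interaction on which the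
   two profiles differ. *)
definition info_weight :: "nat \<Rightarrow> nat \<Rightarrow> nat \<Rightarrow> nat \<Rightarrow> nat \<Rightarrow> real" where
  "info_weight K v S d t = 2 * ((real v - 1) / 2) ^ t / (real v ^ t * real (K choose t)) *
     (\<Sum>b\<le>t. (1 - (- 1 / (real v - 1)) ^ b) * real (d choose b) * real ((S - d) choose (t - b)))"

lemma real_choose_eq_prod: "real (n choose k) = (\<Prod>i<k. real n - real i) / fact k"
  by (simp add: binomial_gbinomial gbinomial_prod_rev atLeast0LessThan)

lemma
  assumes v: "v \<ge> 2" and K: "K \<ge> 3" and d: "d \<le> S"
  shows info_weight_1: "info_weight K v S d 1 = h1 K v S d"
    and info_weight_2: "info_weight K v S d 2 = h2 K v S d"
    and info_weight_3: "info_weight K v S d 3 = h3 K v S d"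
proof -
  have ne: "real v \<noteq> 0" "real v - 1 \<noteq> 0" "real K \<noteq> 0" "real K - 1 \<noteq> 0" "real K - 2 \<noteq> 0"
    using v K by auto
  have Sd: "real (S - d) = real S - real d" using d by simp
  show "info_weight K v S d 1 = h1 K v S d"
    unfolding info_weight_def h1_def real_choose_eq_prod
    using v by (simp add: ne Sd divide_simps)
  show "info_weight K v S d 2 = h2 K v S d"
    unfolding info_weight_def h2_def real_choose_eq_prod using v
    by (simp add: ne Sd eval_nat_numeral lessThan_Suc atMost_Suc divide_simps)
      (simp add: algebra_simps)
  show "info_weight K v S d 3 = h3 K v S d"
    unfolding info_weight_def h3_def lambda_d_def real_choose_eq_prod using v
    by (simp add: ne Sd eval_nat_numeral lessThan_Suc atMost_Suc divide_simps)
      (simp add: algebra_simps)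
qed

lemma card_pattern_pairs:
  assumes "(A, D) \<in> attr_patterns K S d"
  shows "real (card (pattern_pairs v A D)) = (\<Prod>t<K. real (card (level_pairs v A D t)))"
    and "(\<Prod>t<K. real (card (level_pairs v A D t))) = (real v * (real v - 1)) ^ d * real v ^ (S - d)"
proof -
  have A: "A \<subseteq> {..<K}" "card A = S" "D \<subseteq> A" "card D = d"
    using assms by (auto simp: attr_patterns_def)
  show "real (card (pattern_pairs v A D)) = (\<Prod>t<K. real (card (level_pairs v A D t)))"
    using sum_prod_pattern_pairs[OF A(1), where \<psi> = "\<lambda>_ _. 1 :: real"] by simp
  have fA: "finite A" using A(1) finite_subset by blast
  have "(\<Prod>t<K. real (card (level_pairs v A D t))) = (\<Prod>t\<in>A. real (card (level_pairs v A D t)))"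
    using A(1) by (intro prod.mono_neutral_right) (auto simp: card_level_pairs)
  also have "\<dots> = (\<Prod>t\<in>A. if t \<in> D then real v * (real v - 1) else real v)"
    by (intro prod.cong) (auto simp: card_level_pairs)
  also have "\<dots> = (real v * (real v - 1)) ^ card (A \<inter> D) * real v ^ card (A - D)"
    using fA by (simp add: prod.If_cases Int_def Diff_eq)
  also have "A \<inter> D = D" using A(3) by blast
  also have "card (A - D) = S - d" using A fA by (simp add: card_Diff_subset finite_subset)
  finally show "(\<Prod>t<K. real (card (level_pairs v A D t))) = (real v * (real v - 1)) ^ d * real v ^ (S - d)"
    using A(4) by simp
qed

lemma card_design_region_d:
  "real (card (design_region_d K v S d)) =
   real (card (attr_patterns K S d)) * ((real v * (real v - 1)) ^ d * real v ^ (S - d))"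
proof -
  have "real (card (design_region_d K v S d)) = (\<Sum>(A, D)\<in>attr_patterns K S d. real (card (pattern_pairs v A D)))"
    using sum_design_region_d[where F = "\<lambda>_. 1 :: real" and K = K and v = v and S = S and d = d] by simp
  then show ?thesis
    by (simp add: case_prod_unfold card_pattern_pairs)
qed

lemma info_matrix_uniform_design_eq_mean:
  assumes "v \<ge> 2" "S \<le> K" "d \<le> S"
  shows "info_matrix v (uniform_design K v S d) p q =
    (\<Sum>x\<in>design_region_d K v S d. (fvec v (fst x) p - fvec v (snd x) p) * (fvec v (fst x) q - fvec v (snd x) q)) /
    real (card (design_region_d K v S d))"
proof -
  have "real (card (design_region_d K v S d)) > 0"
    using assms by (simp add: card_design_region_d card_attr_patterns)
  then have "design_region_d K v S d \<noteq> {}" by auto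
  then show ?thesis
    unfolding info_matrix_def uniform_design_def
    using finite_design_region_d by (simp add: sum_divide_distrib)
qed

lemma prod_coord_gram:
  "(\<Prod>t\<in>coord_attrs p. coord_gram v p q t) =
   ((real v - 1) / 2) ^ card (coord_attrs p) *
   (\<Prod>t\<in>coord_attrs p. Mmat v (the (coord_level p t)) (the (coord_level q t)))"
  by (simp only: coord_gram_def prod.distrib prod_constant)

lemma sum_design_region_d_info_term_same_attrs:
  assumes p: "p \<in> coords K v" and q: "q \<in> coords K v" and v: "v \<ge> 2"
    and SK: "S \<le> K" and dS: "d \<le> S" and TS: "card (coord_attrs p) \<le> S"
    and eq: "coord_attrs q = coord_attrs p"
  shows "(\<Sum>x\<in>design_region_d K v S d.
            (fvec v (fst x) p - fvec v (snd x) p) * (fvec v (fst x) q - fvec v (snd x) q)) =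
    real (card (design_region_d K v S d)) * info_weight K v S d (card (coord_attrs p)) *
    (\<Prod>t\<in>coord_attrs p. Mmat v (the (coord_level p t)) (the (coord_level q t)))"
proof -
  define T where "T = coord_attrs p"
  define N where "N = (real v * (real v - 1)) ^ d * real v ^ (S - d)"
  define G where "G = (\<Prod>t\<in>T. coord_gram v p q t)"
  define C where "C = real (K choose card T)"
  define \<gamma> where "\<gamma> b = (1 - (- 1 / (real v - 1)) ^ b) / real v ^ card T" for b
  define \<sigma> where "\<sigma> = (\<Sum>b\<le>card T. (1 - (- 1 / (real v - 1)) ^ b) * real (d choose b) *
                         real ((S - d) choose (card T - b)))"
  have TK: "T \<subseteq> {..<K}" using coord_attrs_subset[OF p] by (simp add: T_def)
  have C: "C > 0" using TS SK by (simp add: C_def T_def)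
  have A_sub: "A \<subseteq> {..<K}" if "(A, D) \<in> attr_patterns K S d" for A D
    using that by (simp add: attr_patterns_def)
  have "(\<Sum>x\<in>design_region_d K v S d.
            (fvec v (fst x) p - fvec v (snd x) p) * (fvec v (fst x) q - fvec v (snd x) q)) =
        (\<Sum>(A, D)\<in>attr_patterns K S d. 2 * N * G * (if T \<subseteq> A then \<gamma> (card (T \<inter> D)) else 0))"
    unfolding sum_design_region_d
    using sum_pattern_pairs_info_term_same_attrs[OF p q v A_sub eq] card_pattern_pairs(2)
    by (intro sum.cong refl) (auto simp: T_def G_def \<gamma>_def N_def)
  also have "\<dots> = 2 * N * G * (\<Sum>(A, D)\<in>attr_patterns K S d. if T \<subseteq> A then \<gamma> (card (T \<inter> D)) else 0)"
    by (simp add: sum_distrib_left case_prod_unfold)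
  also have "(\<Sum>(A, D)\<in>attr_patterns K S d. if T \<subseteq> A then \<gamma> (card (T \<inter> D)) else 0) =
      real (card (attr_patterns K S d)) / C * (\<sigma> / real v ^ card T)"
    using sum_attr_patterns_through[OF TK _ SK dS, of \<gamma>] TS
    by (simp add: T_def C_def \<sigma>_def \<gamma>_def sum_divide_distrib mult_ac)
  also have "2 * N * G * (real (card (attr_patterns K S d)) / C * (\<sigma> / real v ^ card T)) =
      (real (card (attr_patterns K S d)) * N) * (2 * G * (\<sigma> / real v ^ card T) / C)"
    by (simp add: field_simps)
  also have "2 * G * (\<sigma> / real v ^ card T) / C =
      info_weight K v S d (card T) * (\<Prod>t\<in>T. Mmat v (the (coord_level p t)) (the (coord_level q t)))"
  proof -
    have "2 * (a * M) * (s / w) / c = 2 * a / (w * c) * s * M" for a M s w c :: real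
      by (simp add: field_simps)
    then show ?thesis
      unfolding G_def T_def prod_coord_gram info_weight_def C_def \<sigma>_def .
  qed
  finally show ?thesis
    by (simp add: card_design_region_d N_def T_def mult_ac)
qed

lemma info_matrix_uniform_design:
  assumes p: "p \<in> coords K v" and q: "q \<in> coords K v" and v: "v \<ge> 2"
    and SK: "S \<le> K" and dS: "d \<le> S" and TS: "card (coord_attrs p) \<le> S"
  shows "info_matrix v (uniform_design K v S d) p q =
    (if coord_attrs p = coord_attrs q
     then info_weight K v S d (card (coord_attrs p)) *
          (\<Prod>t\<in>coord_attrs p. Mmat v (the (coord_level p t)) (the (coord_level q t)))
     else 0)"
proof (cases "coord_attrs p = coord_attrs q")
  case True
  have "real (card (design_region_d K v S d)) > 0"
    using v SK dS by (simp add: card_design_region_d card_attr_patterns)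
  then show ?thesis
    unfolding info_matrix_uniform_design_eq_mean[OF v SK dS]
      sum_design_region_d_info_term_same_attrs[OF p q v SK dS TS True[symmetric]]
    using True by simp
next
  case False
  have "(\<Sum>x\<in>pattern_pairs v A D.
      (fvec v (fst x) p - fvec v (snd x) p) * (fvec v (fst x) q - fvec v (snd x) q)) = 0"
    if "(A, D) \<in> attr_patterns K S d" for A D
    using that sum_pattern_pairs_info_term_distinct_attrs[OF p q v _ False]
    by (simp add: attr_patterns_def)
  then have "(\<Sum>x\<in>design_region_d K v S d.
      (fvec v (fst x) p - fvec v (snd x) p) * (fvec v (fst x) q - fvec v (snd x) q)) = 0"
    unfolding sum_design_region_d by (intro sum.neutral) auto
  then show ?thesis
    using False by (simp add: info_matrix_uniform_design_eq_mean[OF v SK dS])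
qed

lemma sorted_pair_eq:
  fixes k l k' l' :: "'a::linorder"
  assumes "k < l" "k' < l'" "{k, l} = {k', l'}"
  shows "k = k' \<and> l = l'"
proof -
  have "[k, l] = [k', l']" using assms by (intro sorted_distinct_set_unique) auto
  then show ?thesis by simp
qed

lemma sorted_triple_eq:
  fixes k l m k' l' m' :: "'a::linorder"
  assumes "k < l" "l < m" "k' < l'" "l' < m'" "{k, l, m} = {k', l', m'}"
  shows "k = k' \<and> l = l' \<and> m = m'"
proof -
  have "[k, l, m] = [k', l', m']" using assms by (intro sorted_distinct_set_unique) auto
  then show ?thesis by simp
qed

lemma card_coord_attrs:
  assumes "p \<in> coords K v"
  shows "card (coord_attrs p) = (case p of Main _ _ \<Rightarrow> 1 | Int2 _ _ _ _ \<Rightarrow> 2 | Int3 _ _ _ _ _ _ \<Rightarrow> 3)"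
  using assms by (auto simp: coords_def)

lemma coord_attrs_eq_cases:
  assumes p: "p \<in> coords K v" and q: "q \<in> coords K v" and eq: "coord_attrs p = coord_attrs q"
  shows "(\<exists>k a a'. p = Main k a \<and> q = Main k a') \<or>
         (\<exists>k l a b a' b'. p = Int2 k l a b \<and> q = Int2 k l a' b' \<and> k < l) \<or>
         (\<exists>k l m a b c a' b' c'. p = Int3 k l m a b c \<and> q = Int3 k l m a' b' c' \<and> k < l \<and> l < m)"
proof -
  have card: "card (coord_attrs p) = card (coord_attrs q)" using eq by simp
  show ?thesis
  proof (cases p; cases q)
    fix k a l b assume "p = Int2 k l a b"
    fix k' a' l' b' assume "q = Int2 k' l' a' b'"
    then show ?thesis using \<open>p = Int2 k l a b\<close> p q eq sorted_pair_eq[of k l k' l']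
      by (auto simp: coords_def)
  next
    fix k l m a b c assume "p = Int3 k l m a b c"
    fix k' l' m' a' b' c' assume "q = Int3 k' l' m' a' b' c'"
    then show ?thesis using \<open>p = Int3 k l m a b c\<close> p q eq sorted_triple_eq[of k l m k' l' m']
      by (auto simp: coords_def)
  qed (use card card_coord_attrs[OF p] card_coord_attrs[OF q] eq in auto)
qed

lemma block_matrix_eq_info_weight:
  assumes p: "p \<in> coords K v" and q: "q \<in> coords K v"
    and v: "v \<ge> 2" and K: "K \<ge> 3" and d: "d \<le> S"
  shows "block_matrix K v S d p q =
    (if coord_attrs p = coord_attrs q
     then info_weight K v S d (card (coord_attrs p)) *
          (\<Prod>t\<in>coord_attrs p. Mmat v (the (coord_level p t)) (the (coord_level q t)))
     else 0)"
proof (cases "coord_attrs p = coord_attrs q")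
  case False
  then show ?thesis by (cases p; cases q) auto
next
  case True
  note weights = info_weight_1[OF v K d] info_weight_2[OF v K d] info_weight_3[OF v K d]
  note weights' = weights[unfolded One_nat_def numeral_2_eq_2 numeral_3_eq_3]
  from coord_attrs_eq_cases[OF p q True] show ?thesis
    by (elim disjE exE conjE) (simp_all add: weights' mult_ac)
qed

theorem lemma1:
  fixes K v S d :: nat
  assumes "v \<ge> 2" and "K \<ge> 3" and "3 \<le> S" and "S \<le> K" and "d \<le> S"
  shows "\<forall>p\<in>coords K v. \<forall>q\<in>coords K v.
           info_matrix v (uniform_design K v S d) p q = block_matrix K v S d p q"
proof (intro ballI)
  fix p q assume p: "p \<in> coords K v" and q: "q \<in> coords K v"
  have "card (coord_attrs p) \<le> S"
    using card_coord_attrs[OF p] assms(3) by (auto split: coord.splits)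
  then show "info_matrix v (uniform_design K v S d) p q = block_matrix K v S d p q"
    using info_matrix_uniform_design[OF p q assms(1,4,5)] block_matrix_eq_info_weight[OF p q assms(1,2,5)]
    by simp
qed

end
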